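(* Let $(X,\tau,\mathcal{I})$ be a $T_{\mathcal{I}}$-space and let $A\subseteq X$. Then $(A,\tau|_A,\mathcal{I}_A)$ is a $T_{\mathcal{I}_A}$-space, where $\tau|_A$ is the subspace topology and $\mathcal{I}_A=\{I\in\mathcal{I}: I\subseteq A\}=\{I\cap A: I\in\mathcal{I}\}$.
   Context: An ideal on $X$ is a nonempty collection of subsets closed under subsets and finite unions. $(X,\tau,\mathcal{I})$ is a $T_{\mathcal{I}}$-space if for every $I\in\mathcal{I}$ and every $x\in X\setminus I$ there is a set $A_x$ with $x\in A_x$, $A_x\cap I=\emptyset$, and $A_x$ open or closed. *)

theory Defs
  imports "HOL-Analysis.Analysis"
begin

definition is_ideal_on :: "'a set \<Rightarrow> 'a set set \<Rightarrow> bool" where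
  "is_ideal_on S \<I> \<longleftrightarrow> \<I> \<noteq> {} \<and> (\<forall>I\<in>\<I>. I \<subseteq> S)
     \<and> (\<forall>I\<in>\<I>. \<forall>J. J \<subseteq> I \<longrightarrow> J \<in> \<I>)
     \<and> (\<forall>I\<in>\<I>. \<forall>J\<in>\<I>. I \<union> J \<in> \<I>)"

definition T_ideal_space :: "'a topology \<Rightarrow> 'a set set \<Rightarrow> bool" where
  "T_ideal_space T \<I> \<longleftrightarrow>
     (\<forall>I\<in>\<I>. \<forall>x\<in>topspace T - I. \<exists>A. x \<in> A \<and> A \<inter> I = {}
        \<and> (openin T A \<or> closedin T A))"

definition ideal_restrict :: "'a set set \<Rightarrow> 'a set \<Rightarrow> 'a set set" where
  "ideal_restrict \<I> A = {I \<in> \<I>. I \<subseteq> A}"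

end

theory Submission
  imports Defs
begin

text \<open>An open or closed set separating a point from a member of the ideal in X
  traces to an open or closed set of the subspace A separating it there as well;
  and an ideal restricted to A consists precisely of the traces on A of its
  members, because ideals are closed under subsets.\<close>

lemma is_ideal_on_empty_mem:
  assumes "is_ideal_on S \<I>"
  shows "{} \<in> \<I>"
  using assms unfolding is_ideal_on_def by blast

lemma is_ideal_on_ideal_restrict:
  assumes "is_ideal_on S \<I>"
  shows "is_ideal_on A (ideal_restrict \<I> A)"
proof -
  have "\<And>I J. I \<in> \<I> \<Longrightarrow> J \<subseteq> I \<Longrightarrow> J \<in> \<I>"
    and "\<And>I J. I \<in> \<I> \<Longrightarrow> J \<in> \<I> \<Longrightarrow> I \<union> J \<in> \<I>"
    using assms unfolding is_ideal_on_def by blast+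
  with is_ideal_on_empty_mem[OF assms] show ?thesis
    unfolding is_ideal_on_def ideal_restrict_def by blast
qed

lemma ideal_restrict_eq_Int:
  assumes "is_ideal_on S \<I>"
  shows "ideal_restrict \<I> A = {I \<inter> A | I. I \<in> \<I>}"
proof (intro equalityI subsetI)
  fix J
  assume "J \<in> ideal_restrict \<I> A"
  then have "J \<in> \<I>" "J = J \<inter> A"
    unfolding ideal_restrict_def by auto
  then show "J \<in> {I \<inter> A | I. I \<in> \<I>}" by blast
next
  fix J
  assume "J \<in> {I \<inter> A | I. I \<in> \<I>}"
  then obtain I where "I \<in> \<I>" "J = I \<inter> A" by blast
  with assms have "J \<in> \<I>" "J \<subseteq> A"
    unfolding is_ideal_on_def by blast+
  then show "J \<in> ideal_restrict \<I> A"
    unfolding ideal_restrict_def by blast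
qed

lemma T_ideal_space_subset:
  assumes "T_ideal_space T \<I>" and "\<J> \<subseteq> \<I>"
  shows "T_ideal_space T \<J>"
  using assms unfolding T_ideal_space_def by blast

lemma T_ideal_space_subtopology:
  assumes "T_ideal_space T \<I>"
  shows "T_ideal_space (subtopology T A) \<I>"
  unfolding T_ideal_space_def
proof (intro ballI)
  fix I x
  assume I: "I \<in> \<I>" and x: "x \<in> topspace (subtopology T A) - I"
  then have "x \<in> topspace T - I" "x \<in> A" by auto
  with I assms obtain B where B: "x \<in> B" "B \<inter> I = {}" "openin T B \<or> closedin T B"
    unfolding T_ideal_space_def by blast
  then have "openin (subtopology T A) (A \<inter> B) \<or> closedin (subtopology T A) (A \<inter> B)"
    using openin_subtopology_Int2 closedin_subtopology_Int_closed by blast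
  with B \<open>x \<in> A\<close>
  show "\<exists>C. x \<in> C \<and> C \<inter> I = {} \<and> (openin (subtopology T A) C \<or> closedin (subtopology T A) C)"
    by (intro exI[of _ "A \<inter> B"]) auto
qed

theorem mainTheorem4:
  fixes T :: "'a topology" and \<I> :: "'a set set" and A :: "'a set"
  assumes "is_ideal_on (topspace T) \<I>"
    and "T_ideal_space T \<I>"
    and "A \<subseteq> topspace T"
  shows "is_ideal_on A (ideal_restrict \<I> A)
         \<and> ideal_restrict \<I> A = {I \<inter> A | I. I \<in> \<I>}
         \<and> T_ideal_space (subtopology T A) (ideal_restrict \<I> A)"
proof (intro conjI)
  show "is_ideal_on A (ideal_restrict \<I> A)"
    using assms(1) by (rule is_ideal_on_ideal_restrict)
  show "ideal_restrict \<I> A = {I \<inter> A | I. I \<in> \<I>}"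
    using assms(1) by (rule ideal_restrict_eq_Int)
  have "ideal_restrict \<I> A \<subseteq> \<I>"
    unfolding ideal_restrict_def by blast
  then show "T_ideal_space (subtopology T A) (ideal_restrict \<I> A)"
    using T_ideal_space_subtopology[OF assms(2)] by (rule T_ideal_space_subset[rotated])
qed

end
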